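(* Assume (A1), (A2), (A3) below, let $r\in\mathcal R_\epsilon$, $x_0\in\mathcal D_x(r)$, let $p$ be the fixed planned path, and consider the closed-loop PathFG+MPC trajectory $s_{k+1}=g(\xi^*_{N|k})$, $x_{k+1}=f(x_k,\tilde\kappa(x_k,s_k))$, where $\xi^*_{N|k}=\tilde\xi_N^*(x_k,s_k)$. Then there exist $\delta>0$ and $\alpha>0$ such that for every $k$ with $\|\xi^*_{N|k}-\tilde x_{s_k}\|\le\delta$ (i.e. $(\xi^*_{N|k},p(s_k))\in\mathcal B_\delta(\Sigma)$): $s_{k+1}-s_k\ge\alpha$ if $1-s_k>\alpha$, and $s_{k+1}=1$ if $1-s_k\le\alpha$.
   Context: System: $x_{k+1}=f(x_k,u_k)$, $x_k\in\mathbb R^{n_x}$, $u_k\in\mathbb R^{n_u}$, with $\mathcal X=\{x:h_x(x)\le0\}$, $\mathcal U=\{u:h_u(u)\le0\}$. (A1) $f$ is locally Lipschitz, $h_x,h_u$ are continuous, and there are a set $\mathcal R\subseteq\mathbb R^{n_r}$ and continuous maps $r\mapsto\bar x_r\in\mathcal X$, $r\mapsto\bar u_r\in\mathcal U$ with $\bar x_r=f(\bar x_r,\bar u_r)$. For fixed $\epsilon>0$, $\mathcal R_\epsilon=\{r\in\mathcal R:h_x(\bar x_r)\le-\epsilon,\ h_u(\bar u_r)\le-\epsilon\}$. MPC: horizon $N\in\mathbb N_{>0}$, stage cost $\ell:\mathcal X\times\mathcal U\times\mathcal R_\epsilon\to\mathbb R_{\ge0}$, terminal set $\mathcal T\subseteq\mathcal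 X\times\mathcal R$, terminal cost $V:\mathcal T\to\mathbb R_{\ge0}$. The OCP at $(x,r)$: minimize $V(\xi_N,r)+\sum_{i=0}^{N-1}\ell(\xi_i,\mu_i,r)$ subject to $\xi_0=x$, $\xi_{i+1}=f(\xi_i,\mu_i)$, $\xi_i\in\mathcal X$, $\mu_i\in\mathcal U$ ($i=0,\dots,N-1$), $(\xi_N,r)\in\mathcal T$. $\Gamma=\{(x,r)\in\mathcal X\times\mathcal R_\epsilon:$ OCP feasible$\}$; $\zeta^*(x,r)=(\xi_0^*,\dots,\xi_N^*,\mu_0^*,\dots,\mu_{N-1}^* )$ is the minimizer (treated as a function), $\xi_N^*(x,r)$ its final state, $\kappa(x,r)=\mu_0^*(x,r)$. (A2) (a) $\ell$ uniformly continuous, $\ell(\bar x_r,\bar u_r,r)=0$, $\ell(x,u,r)\ge\gamma_\ell(\|x-\bar x_r\|)$ for some $\gamma_\ell\in\mathcal K_\infty$, all $(x,r)\in\Gamma$, $u\in\mathcal U$. (b) $V$ uniformly continuous, $V(\bar x_r,r)=0$, $V\ge0$ on $\mathcal T$, and some $\kappa_T:\mathcal T\to\mathcal U$ satisfies $V(f(x,\kappa_T(x,r)),r)-V(x,r)\le-\ell(x,\kappa_T(x,r),r)$ on $\mathcal T$. (c) $(x,r)\in\mathcal T\Rightarrow(f(x,\kappa_T(x,r)),r)\in\mathcal T$, $x\in\mathcal X$, $\kappa_T(x,r)\in\mathcal U$. (d) $(\bar x_r,r)\in\operatorname{int}\mathcal T$ for all $r\in\mathcal R_\epsilon$. (e)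 $\zeta^*$ is Lipschitz continuous. Paths: a feasible path for $(x_0,r)$, $r\in\mathcal R_\epsilon$, is $\{p(s):s\in[0,1]\}$ with $p:[0,1]\to\mathcal R_\epsilon$ continuous, $(x_0,p(0))\in\Gamma$, $p(1)=r$; $\mathcal D_x(r)$ is the set of $x_0$ for which such a path exists. (A3) For such $(x_0,r)$ the planner returns a feasible path. With $p$ fixed: $\tilde x_s=\bar x_{p(s)}$, $\tilde{\mathcal T}=\{(x,s):(x,p(s))\in\mathcal T\}$, $\tilde\xi_N^*(x,s)=\xi_N^*(x,p(s))$, $\tilde\kappa(x,s)=\kappa(x,p(s))$, and $g(\xi)=\max\{s\in[0,1]:(\xi,s)\in\tilde{\mathcal T}\}$. $\Sigma=\{(\tilde x_s,p(s)):s\in[0,1]\}$ and $\mathcal B_\delta(\Sigma)=\{(x,p(s)):\|x-\tilde x_s\|\le\delta,\ s\in[0,1]\}$. *)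

theory Defs
  imports "HOL-Analysis.Analysis"
begin

definition cset :: "('a \<Rightarrow> 'h::ordered_euclidean_space) \<Rightarrow> 'a set" where
  "cset h = {z. h z \<le> 0}"

definition Reps :: "'r set \<Rightarrow> ('x \<Rightarrow> 'hx::ordered_euclidean_space) \<Rightarrow> ('u \<Rightarrow> 'hu::ordered_euclidean_space)
    \<Rightarrow> ('r \<Rightarrow> 'x) \<Rightarrow> ('r \<Rightarrow> 'u) \<Rightarrow> real \<Rightarrow> 'r set" where
  "Reps R hx hu xb ub \<epsilon> = {r \<in> R. hx (xb r) \<le> - (\<epsilon> *\<^sub>R One) \<and> hu (ub r) \<le> - (\<epsilon> *\<^sub>R One)}"

definition A1 :: "('x::real_normed_vector \<Rightarrow> 'u::real_normed_vector \<Rightarrow> 'x) \<Rightarrow> ('x \<Rightarrow> 'hx::ordered_euclidean_space)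
    \<Rightarrow> ('u \<Rightarrow> 'hu::ordered_euclidean_space) \<Rightarrow> 'r::topological_space set \<Rightarrow> ('r \<Rightarrow> 'x) \<Rightarrow> ('r \<Rightarrow> 'u) \<Rightarrow> bool" where
  "A1 f hx hu R xb ub \<longleftrightarrow>
     (\<forall>z. \<exists>e>0. \<exists>L. lipschitz_on L (ball z e) (\<lambda>(x, u). f x u)) \<and>
     continuous_on UNIV hx \<and> continuous_on UNIV hu \<and>
     continuous_on R xb \<and> continuous_on R ub \<and>
     (\<forall>r\<in>R. xb r \<in> cset hx \<and> ub r \<in> cset hu \<and> xb r = f (xb r) (ub r))"

definition ocp_feasible :: "('x \<Rightarrow> 'u \<Rightarrow> 'x) \<Rightarrow> 'x set \<Rightarrow> 'u set \<Rightarrow> ('x \<times> 'r) set \<Rightarrow> nat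
    \<Rightarrow> 'x \<Rightarrow> 'r \<Rightarrow> (nat \<Rightarrow> 'x) \<Rightarrow> (nat \<Rightarrow> 'u) \<Rightarrow> bool" where
  "ocp_feasible f X U T N x r \<xi> \<mu> \<longleftrightarrow>
     \<xi> 0 = x \<and> (\<forall>i<N. \<xi> (Suc i) = f (\<xi> i) (\<mu> i) \<and> \<xi> i \<in> X \<and> \<mu> i \<in> U) \<and> (\<xi> N, r) \<in> T"

definition ocp_cost :: "('x \<Rightarrow> 'u \<Rightarrow> 'r \<Rightarrow> real) \<Rightarrow> ('x \<Rightarrow> 'r \<Rightarrow> real) \<Rightarrow> nat
    \<Rightarrow> 'r \<Rightarrow> (nat \<Rightarrow> 'x) \<Rightarrow> (nat \<Rightarrow> 'u) \<Rightarrow> real" where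
  "ocp_cost lc V N r \<xi> \<mu> = V (\<xi> N) r + (\<Sum>i<N. lc (\<xi> i) (\<mu> i) r)"

definition Gamma :: "('x \<Rightarrow> 'u \<Rightarrow> 'x) \<Rightarrow> 'x set \<Rightarrow> 'u set \<Rightarrow> 'r set \<Rightarrow> ('x \<times> 'r) set \<Rightarrow> nat
    \<Rightarrow> ('x \<times> 'r) set" where
  "Gamma f X U Rset T N = {(x, r). x \<in> X \<and> r \<in> Rset \<and> (\<exists>\<xi> \<mu>. ocp_feasible f X U T N x r \<xi> \<mu>)}"

definition is_minimizer :: "('x \<Rightarrow> 'u \<Rightarrow> 'x) \<Rightarrow> 'x set \<Rightarrow> 'u set \<Rightarrow> 'r set \<Rightarrow> ('x \<times> 'r) set \<Rightarrow> nat
    \<Rightarrow> ('x \<Rightarrow> 'u \<Rightarrow> 'r \<Rightarrow> real) \<Rightarrow> ('x \<Rightarrow> 'r \<Rightarrow> real)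
    \<Rightarrow> ('x \<Rightarrow> 'r \<Rightarrow> nat \<Rightarrow> 'x) \<Rightarrow> ('x \<Rightarrow> 'r \<Rightarrow> nat \<Rightarrow> 'u) \<Rightarrow> bool" where
  "is_minimizer f X U Rset T N lc V xi mu \<longleftrightarrow>
     (\<forall>(x, r) \<in> Gamma f X U Rset T N.
        ocp_feasible f X U T N x r (xi x r) (mu x r) \<and>
        (\<forall>\<xi> \<mu>. ocp_feasible f X U T N x r \<xi> \<mu> \<longrightarrow>
              ocp_cost lc V N r (xi x r) (mu x r) \<le> ocp_cost lc V N r \<xi> \<mu>))"

definition Kinf :: "(real \<Rightarrow> real) \<Rightarrow> bool" where
  "Kinf \<gamma> \<longleftrightarrow> \<gamma> 0 = 0 \<and> continuous_on {0..} \<gamma> \<and> strict_mono_on {0..} \<gamma> \<and> filterlim \<gamma> at_top at_top"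

definition A2 :: "('x::real_normed_vector \<Rightarrow> 'u::real_normed_vector \<Rightarrow> 'x) \<Rightarrow> 'x set \<Rightarrow> 'u set
    \<Rightarrow> 'r::real_normed_vector set \<Rightarrow> 'r set \<Rightarrow> ('r \<Rightarrow> 'x) \<Rightarrow> ('r \<Rightarrow> 'u) \<Rightarrow> nat
    \<Rightarrow> ('x \<Rightarrow> 'u \<Rightarrow> 'r \<Rightarrow> real) \<Rightarrow> ('x \<times> 'r) set \<Rightarrow> ('x \<Rightarrow> 'r \<Rightarrow> real)
    \<Rightarrow> ('x \<Rightarrow> 'r \<Rightarrow> nat \<Rightarrow> 'x) \<Rightarrow> ('x \<Rightarrow> 'r \<Rightarrow> nat \<Rightarrow> 'u) \<Rightarrow> bool" where
  "A2 f X U R Rset xb ub N lc T V xi mu \<longleftrightarrow>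
     \<comment> \<open>(a)\<close>
     uniformly_continuous_on (X \<times> U \<times> Rset) (\<lambda>(x, u, r). lc x u r) \<and>
     (\<forall>x\<in>X. \<forall>u\<in>U. \<forall>r\<in>Rset. 0 \<le> lc x u r) \<and>
     (\<forall>r\<in>Rset. lc (xb r) (ub r) r = 0) \<and>
     (\<exists>\<gamma>. Kinf \<gamma> \<and> (\<forall>(x, r) \<in> Gamma f X U Rset T N. \<forall>u\<in>U. \<gamma> (norm (x - xb r)) \<le> lc x u r)) \<and>
     \<comment> \<open>(b)\<close>
     uniformly_continuous_on T (\<lambda>(x, r). V x r) \<and>
     (\<forall>r\<in>Rset. V (xb r) r = 0) \<and>
     (\<forall>(x, r) \<in> T. 0 \<le> V x r) \<and>
     (\<exists>\<kappa>T. \<forall>(x, r) \<in> T.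
        V (f x (\<kappa>T x r)) r - V x r \<le> - lc x (\<kappa>T x r) r \<and>
     \<comment> \<open>(c)\<close>
        (f x (\<kappa>T x r), r) \<in> T \<and> x \<in> X \<and> \<kappa>T x r \<in> U) \<and>
     \<comment> \<open>(d)\<close>
     (\<forall>r\<in>Rset. (xb r, r) \<in> interior T) \<and>
     \<comment> \<open>(e) zeta* Lipschitz on Gamma (componentwise bound, equivalent to product-norm Lipschitz)\<close>
     (\<exists>L. \<forall>(x, r) \<in> Gamma f X U Rset T N. \<forall>(x', r') \<in> Gamma f X U Rset T N.
        (\<forall>i\<le>N. norm (xi x r i - xi x' r' i) \<le> L * dist (x, r) (x', r')) \<and>
        (\<forall>i<N. norm (mu x r i - mu x' r' i) \<le> L * dist (x, r) (x', r')))"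

definition feasible_path :: "('x \<times> 'r) set \<Rightarrow> 'r::topological_space set \<Rightarrow> 'x \<Rightarrow> 'r \<Rightarrow> (real \<Rightarrow> 'r) \<Rightarrow> bool" where
  "feasible_path Gam Rset x0 r p \<longleftrightarrow>
     continuous_on {0..1} p \<and> p ` {0..1} \<subseteq> Rset \<and> (x0, p 0) \<in> Gam \<and> p 1 = r"

definition Dx :: "('x \<times> 'r) set \<Rightarrow> 'r::topological_space set \<Rightarrow> 'r \<Rightarrow> 'x set" where
  "Dx Gam Rset r = {x0. \<exists>p. feasible_path Gam Rset x0 r p}"

text \<open>g(xi) = max{s in [0,1]. (xi, p s) in T}, taken as the supremum (equal to the max when it exists).\<close>
definition path_g :: "('x \<times> 'r) set \<Rightarrow> (real \<Rightarrow> 'r) \<Rightarrow> 'x \<Rightarrow> real" where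
  "path_g T p \<xi> = Sup {s \<in> {0..1}. (\<xi>, p s) \<in> T}"

end

theory Submission
  imports Defs
begin

text \<open>The curve \<open>t \<mapsto> (xb (p t), p t)\<close> is a compact subset of the interior of the terminal
  set, so a whole tube of uniform width around it lies in the terminal set. Uniform continuity
  of the path then yields \<open>\<alpha> > 0\<close> such that, whenever the predicted terminal state is
  \<open>\<delta>\<close>-close to \<open>xb (p (s k))\<close>, every parameter in \<open>[s k, s k + \<alpha>] \<inter> [0, 1]\<close> is
  admissible in the maximisation defining \<open>g\<close>, which forces the claimed progress of \<open>s\<close>.
  Only the continuity of the path and of \<open>xb\<close> and assumption (A2)(d) are needed.\<close>

lemma tube_around_compact_curve_in_interior:
  fixes a :: "'s::metric_space \<Rightarrow> 'a::metric_space" and p :: "'s \<Rightarrow> 'b::metric_space"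
  assumes "compact S" and a_cont: "continuous_on S a" and p_cont: "continuous_on S p"
    and curve_int: "\<And>t. t \<in> S \<Longrightarrow> (a t, p t) \<in> interior T"
  obtains \<delta> \<alpha> where "\<delta> > 0" "\<alpha> > 0"
    "\<And>\<sigma> t \<xi>. \<sigma> \<in> S \<Longrightarrow> t \<in> S \<Longrightarrow> dist t \<sigma> \<le> \<alpha> \<Longrightarrow> dist \<xi> (a \<sigma>) \<le> \<delta> \<Longrightarrow> (\<xi>, p t) \<in> T"
proof -
  define K where "K = (\<lambda>t. (a t, p t)) ` S"
  have "compact K"
    unfolding K_def using \<open>compact S\<close> a_cont p_cont
    by (intro compact_continuous_image continuous_on_Pair)
  moreover have "K \<subseteq> interior T"
    unfolding K_def using curve_int by auto
  ultimately obtain e where "e > 0" and tube: "(\<Union>z\<in>K. ball z e) \<subseteq> interior T"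
    using compact_subset_open_imp_ball_epsilon_subset[of K "interior T"] by auto
  have "uniformly_continuous_on S p"
    using p_cont \<open>compact S\<close> by (rule compact_uniformly_continuous)
  moreover have "e/2 > 0" using \<open>e > 0\<close> by simp
  ultimately obtain d where "d > 0"
    and p_close: "\<And>\<sigma> t. \<sigma> \<in> S \<Longrightarrow> t \<in> S \<Longrightarrow> dist t \<sigma> < d \<Longrightarrow> dist (p t) (p \<sigma>) < e/2"
    unfolding uniformly_continuous_on_def by metis
  have "(\<xi>, p t) \<in> T"
    if "\<sigma> \<in> S" "t \<in> S" "dist t \<sigma> \<le> d/2" "dist \<xi> (a \<sigma>) \<le> e/3" for \<sigma> t \<xi>
  proof -
    have "dist (a \<sigma>, p \<sigma>) (\<xi>, p t) \<le> dist (a \<sigma>) \<xi> + dist (p \<sigma>) (p t)"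
      unfolding dist_Pair_Pair by (rule sqrt_sum_squares_le_sum) auto
    also have "\<dots> < e"
      using that p_close[of \<sigma> t] \<open>e > 0\<close> \<open>d > 0\<close> by (simp add: dist_commute)
    finally have "(\<xi>, p t) \<in> ball (a \<sigma>, p \<sigma>) e" by simp
    moreover have "(a \<sigma>, p \<sigma>) \<in> K" unfolding K_def using \<open>\<sigma> \<in> S\<close> by blast
    ultimately show ?thesis using tube interior_subset by blast
  qed
  moreover have "e/3 > 0" "d/2 > 0" using \<open>e > 0\<close> \<open>d > 0\<close> by simp_all
  ultimately show ?thesis using that by blast
qed

lemma path_g_ge:
  assumes "t \<in> {0..1}" "(\<xi>, p t) \<in> T"
  shows "t \<le> path_g T p \<xi>"
  unfolding path_g_def using assms by (intro cSup_upper) (auto intro: bdd_aboveI[of _ 1])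

lemma path_g_le_one:
  assumes "t \<in> {0..1}" "(\<xi>, p t) \<in> T"
  shows "path_g T p \<xi> \<le> 1"
  unfolding path_g_def using assms by (intro cSup_least) auto

lemma path_g_advance:
  assumes "\<sigma> \<in> {0..1}" "\<alpha> > 0"
    and admissible: "\<And>t. t \<in> {0..1} \<Longrightarrow> \<sigma> \<le> t \<Longrightarrow> t \<le> \<sigma> + \<alpha> \<Longrightarrow> (\<xi>, p t) \<in> T"
  shows "(1 - \<sigma> > \<alpha> \<longrightarrow> path_g T p \<xi> - \<sigma> \<ge> \<alpha>) \<and> (1 - \<sigma> \<le> \<alpha> \<longrightarrow> path_g T p \<xi> = 1)"
proof (intro conjI impI)
  assume "1 - \<sigma> > \<alpha>"
  then have "\<sigma> + \<alpha> \<le> path_g T p \<xi>"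
    using assms by (intro path_g_ge admissible) auto
  then show "path_g T p \<xi> - \<sigma> \<ge> \<alpha>" by simp
next
  assume "1 - \<sigma> \<le> \<alpha>"
  then have "(\<xi>, p 1) \<in> T" using assms by (intro admissible) auto
  then show "path_g T p \<xi> = 1"
    using path_g_ge[of 1] path_g_le_one[of 1] by fastforce
qed

theorem lemma6:
  fixes f :: "'x::euclidean_space \<Rightarrow> 'u::euclidean_space \<Rightarrow> 'x"
    and hx :: "'x \<Rightarrow> 'hx::ordered_euclidean_space"
    and hu :: "'u \<Rightarrow> 'hu::ordered_euclidean_space"
    and R :: "'r::euclidean_space set"
    and xb :: "'r \<Rightarrow> 'x" and ub :: "'r \<Rightarrow> 'u"
    and \<epsilon> :: real and N :: nat
    and lc :: "'x \<Rightarrow> 'u \<Rightarrow> 'r \<Rightarrow> real"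
    and T :: "('x \<times> 'r) set" and V :: "'x \<Rightarrow> 'r \<Rightarrow> real"
    and xi :: "'x \<Rightarrow> 'r \<Rightarrow> nat \<Rightarrow> 'x" and mu :: "'x \<Rightarrow> 'r \<Rightarrow> nat \<Rightarrow> 'u"
    and r :: 'r and x0 :: 'x and p :: "real \<Rightarrow> 'r"
    and x :: "nat \<Rightarrow> 'x" and s :: "nat \<Rightarrow> real"
  assumes eps: "\<epsilon> > 0" and hor: "N > 0"
    and A1: "A1 f hx hu R xb ub"
    and T_sub: "T \<subseteq> cset hx \<times> R"
    and min: "is_minimizer f (cset hx) (cset hu) (Reps R hx hu xb ub \<epsilon>) T N lc V xi mu"
    and A2: "A2 f (cset hx) (cset hu) R (Reps R hx hu xb ub \<epsilon>) xb ub N lc T V xi mu"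
    and r_in: "r \<in> Reps R hx hu xb ub \<epsilon>"
    and x0_in: "x0 \<in> Dx (Gamma f (cset hx) (cset hu) (Reps R hx hu xb ub \<epsilon>) T N) (Reps R hx hu xb ub \<epsilon>) r"
    and A3: "feasible_path (Gamma f (cset hx) (cset hu) (Reps R hx hu xb ub \<epsilon>) T N) (Reps R hx hu xb ub \<epsilon>) x0 r p"
    and x_0: "x 0 = x0" and s_0: "s 0 = 0"
    and s_step: "\<And>k. s (Suc k) = path_g T p (xi (x k) (p (s k)) N)"
    and x_step: "\<And>k. x (Suc k) = f (x k) (mu (x k) (p (s k)) 0)"
  shows "\<exists>\<delta>>0. \<exists>\<alpha>>0. \<forall>k. s k \<in> {0..1} \<and> norm (xi (x k) (p (s k)) N - xb (p (s k))) \<le> \<delta> \<longrightarrow>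
           (1 - s k > \<alpha> \<longrightarrow> s (Suc k) - s k \<ge> \<alpha>) \<and> (1 - s k \<le> \<alpha> \<longrightarrow> s (Suc k) = 1)"
proof -
  have p_cont: "continuous_on {0..1} p" and p_in_Reps: "p ` {0..1} \<subseteq> Reps R hx hu xb ub \<epsilon>"
    using A3 unfolding feasible_path_def by auto
  then have p_in_R: "p ` {0..1} \<subseteq> R" unfolding Reps_def by auto
  have "continuous_on {0..1} (xb \<circ> p)"
    using A1 p_cont p_in_R unfolding A1_def by (auto intro: continuous_on_compose2)
  moreover have "(xb (p t), p t) \<in> interior T" if "t \<in> {0..1}" for t
  proof -
    have "\<forall>q\<in>Reps R hx hu xb ub \<epsilon>. (xb q, q) \<in> interior T"
      using A2 unfolding A2_def by blast
    then show ?thesis using p_in_Reps that by blast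
  qed
  ultimately obtain \<delta> \<alpha> where "\<delta> > 0" "\<alpha> > 0" and tube:
    "\<And>\<sigma> t \<xi>. \<sigma> \<in> {0..1} \<Longrightarrow> t \<in> {0..1} \<Longrightarrow> dist t \<sigma> \<le> \<alpha> \<Longrightarrow> dist \<xi> (xb (p \<sigma>)) \<le> \<delta>
       \<Longrightarrow> (\<xi>, p t) \<in> T"
    using tube_around_compact_curve_in_interior[of "{0..1::real}" "xb \<circ> p" p T] p_cont by auto
  have "(1 - s k > \<alpha> \<longrightarrow> s (Suc k) - s k \<ge> \<alpha>) \<and> (1 - s k \<le> \<alpha> \<longrightarrow> s (Suc k) = 1)"
    if "s k \<in> {0..1}" "norm (xi (x k) (p (s k)) N - xb (p (s k))) \<le> \<delta>" for k
    unfolding s_step using that \<open>\<alpha> > 0\<close>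
    by (intro path_g_advance tube) (auto simp: dist_norm)
  then show ?thesis using \<open>\<delta> > 0\<close> \<open>\<alpha> > 0\<close> by blast
qed

end
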